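(* Assume the setting in the context and fix $J\subseteq\mathcal J$ and $p\ge1$. Suppose that for every $j\in J$ there is a constant $C_j>0$ such that for every $f\in\mathfrak F_j$, $$|f(x+y)-f(x)|\le C_j\max\big(1,\|y\|^{p-1},\|x\|^{p-1}\big)\|y\|\quad\text{for all }x\in\mathcal X,\ y\in\mathbb{R}^m,$$ that $\mathbb{E}[\|X\|^{2(p-1)}]<\infty$, and that $\{\mu_n\}$ is a strong approximate identity of order $p$. Then for every $j\in J$, $$\sup_{f\in\mathfrak F_j}\mathbb{E}\Big[\Big(\int_{\mathbb{R}^m}\big(f(X+y)-f(X)\big)\mu_n(dy)\Big)^2\Big]\xrightarrow[n\to\infty]{}0\quad\text{and}\quad \sup_{f\in\mathfrak F_j}\sqrt n\Big|\mathbb{E}\Big[\int_{\mathbb{R}^m}\big(f(X+y)-f(X)\big)\mu_n(dy)\Big]\Big|\xrightarrow[n\to\infty]{}0.$$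
   Context: $X$ is a random vector with values in $\mathcal X\subseteq\mathbb{R}^m$ and law $P$. Functions $f_j:\mathbb{R}^{m_j}\times\mathbb{R}^m\to\mathbb{R}^{m_{j-1}}$ ($j=1,\dots,k$) and $f_{k+1}:\mathbb{R}^m\to\mathbb{R}^{m_k}$ are given, $I_j\subset\mathbb{R}^{m_j}$ are fixed compact convex sets, $\mathcal J=\{1,\dots,k+1\}$, and with $f_{j,i}$ the $i$-th coordinate of $f_j$, $\mathfrak F_j=\{f_{j,i}(\eta,\cdot):\ i=1,\dots,m_{j-1},\ \eta\in I_j\}$ for $j\le k$ and $\mathfrak F_{k+1}=\{f_{k+1,i}:i=1,\dots,m_k\}$. A sequence $\{\mu_n\}$ of probability measures on $\mathbb{R}^m$ is a proper approximate convolution identity of order $p\ge1$ if $\mu_n\to\delta_0$ weakly and $\int\|z\|^p\mu_n(dz)<\infty$ for all $n$; it is a strong approximate identity of order $p$ if in addition $\lim_{n\to\infty}\sqrt n\int_{\mathbb{R}^m}\max(\|z\|,\|z\|^p)\,\mu_n(dz)=0$. *)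

theory Defs
  imports "HOL-Probability.Probability"
begin

definition weak_conv_delta0 :: "(nat \<Rightarrow> 'a::euclidean_space measure) \<Rightarrow> bool" where
  "weak_conv_delta0 \<mu> \<longleftrightarrow>
     (\<forall>g::'a \<Rightarrow> real. continuous_on UNIV g \<and> bounded (range g) \<longrightarrow>
        (\<lambda>n. integral\<^sup>L (\<mu> n) g) \<longlonglongrightarrow> g 0)"

definition proper_approx_identity :: "(nat \<Rightarrow> 'a::euclidean_space measure) \<Rightarrow> real \<Rightarrow> bool" where
  "proper_approx_identity \<mu> p \<longleftrightarrow>
     (\<forall>n. prob_space (\<mu> n) \<and> sets (\<mu> n) = sets borel) \<and>
     weak_conv_delta0 \<mu> \<and>
     (\<forall>n. integrable (\<mu> n) (\<lambda>z. norm z powr p))"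

definition strong_approx_identity :: "(nat \<Rightarrow> 'a::euclidean_space measure) \<Rightarrow> real \<Rightarrow> bool" where
  "strong_approx_identity \<mu> p \<longleftrightarrow>
     proper_approx_identity \<mu> p \<and>
     (\<lambda>n. sqrt (real n) * integral\<^sup>L (\<mu> n) (\<lambda>z. max (norm z) (norm z powr p)))
        \<longlonglongrightarrow> 0"

text \<open>Parameters are encoded as finitely supported vectors \<open>nat \<Rightarrow> real\<close> with coordinates
  \<open>1..m j\<close>; \<open>f j i \<eta> x\<close> is the \<open>i\<close>-th coordinate of \<open>f_j(\<eta>,x)\<close> (\<open>j \<le> k\<close>),
  \<open>g i x\<close> is the \<open>i\<close>-th coordinate of \<open>f_{k+1}(x)\<close>.\<close>
definition param_set_ok :: "nat \<Rightarrow> (nat \<Rightarrow> real) set \<Rightarrow> bool" where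
  "param_set_ok d S \<longleftrightarrow>
     S \<subseteq> {\<eta>. \<forall>i. i \<notin> {1..d} \<longrightarrow> \<eta> i = 0} \<and> compact S \<and>
     (\<forall>x\<in>S. \<forall>y\<in>S. \<forall>t::real. 0 \<le> t \<and> t \<le> 1 \<longrightarrow> (\<lambda>i. t * x i + (1 - t) * y i) \<in> S)"

definition Fclass ::
  "nat \<Rightarrow> (nat \<Rightarrow> nat) \<Rightarrow> (nat \<Rightarrow> (nat \<Rightarrow> real) set) \<Rightarrow>
   (nat \<Rightarrow> nat \<Rightarrow> (nat \<Rightarrow> real) \<Rightarrow> 'a \<Rightarrow> real) \<Rightarrow> (nat \<Rightarrow> 'a \<Rightarrow> real) \<Rightarrow> nat \<Rightarrow> ('a \<Rightarrow> real) set" where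
  "Fclass k m I f g j =
     (if j \<le> k then {f j i \<eta> | i \<eta>. i \<in> {1..m (j - 1)} \<and> \<eta> \<in> I j}
      else {g i | i. i \<in> {1..m k}})"

end

theory Submission
  imports Defs
begin

text \<open>With \<open>\<phi>(y) = max(\<parallel>y\<parallel>, \<parallel>y\<parallel>\<^sup>p)\<close>, the growth condition gives
  \<open>|f(x+y) - f(x)| \<le> C (2 + \<parallel>x\<parallel>\<^sup>p\<^sup>-\<^sup>1) \<phi>(y)\<close> uniformly over the class. Integrating in \<open>y\<close>,
  the inner integral is bounded by \<open>C B(X) e\<^sub>n\<close> with \<open>B = 2 + \<parallel>X\<parallel>\<^sup>p\<^sup>-\<^sup>1\<close> and
  \<open>e\<^sub>n = \<integral>\<phi> d\<mu>\<^sub>n\<close>. The moment condition makes \<open>B\<close> square integrable, so the second moment is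
  \<open>O(e\<^sub>n\<^sup>2)\<close> and \<open>\<surd>n\<close> times the mean is \<open>O(\<surd>n e\<^sub>n)\<close>; both vanish because \<open>\<surd>n e\<^sub>n \<rightarrow> 0\<close>
  for a strong approximate identity.\<close>

lemma abs_integral_le_mult_integral:
  fixes D B :: "'b \<Rightarrow> real"
  assumes "integrable M B" and "\<And>x. x \<in> space M \<Longrightarrow> \<bar>D x\<bar> \<le> c * B x"
  shows "\<bar>integral\<^sup>L M D\<bar> \<le> c * integral\<^sup>L M B"
proof -
  have "\<bar>integral\<^sup>L M D\<bar> \<le> (\<integral>x. \<bar>D x\<bar> \<partial>M)"
    by (rule integral_abs_bound)
  also have "\<dots> \<le> (\<integral>x. c * B x \<partial>M)"
    using assms by (intro integral_mono') (auto intro: order_trans[OF abs_ge_zero])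
  finally show ?thesis by simp
qed

lemma integral_square_le_mult_integral:
  fixes D B :: "'b \<Rightarrow> real"
  assumes "integrable M (\<lambda>x. (B x)\<^sup>2)" and "\<And>x. x \<in> space M \<Longrightarrow> \<bar>D x\<bar> \<le> c * B x"
  shows "(\<integral>x. (D x)\<^sup>2 \<partial>M) \<le> c\<^sup>2 * (\<integral>x. (B x)\<^sup>2 \<partial>M)"
proof -
  have "(D x)\<^sup>2 \<le> c\<^sup>2 * (B x)\<^sup>2" if "x \<in> space M" for x
    using power_mono[OF assms(2)[OF that] abs_ge_zero, of 2] by (simp add: power_mult_distrib)
  then have "(\<integral>x. (D x)\<^sup>2 \<partial>M) \<le> (\<integral>x. c\<^sup>2 * (B x)\<^sup>2 \<partial>M)"
    using assms(1) by (intro integral_mono') auto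
  then show ?thesis by simp
qed

lemma max_powr_mult_le:
  fixes s t p :: real
  assumes "s \<ge> 0" and "t \<ge> 0"
  shows "max 1 (max (t powr (p - 1)) (s powr (p - 1))) * t \<le> (2 + s powr (p - 1)) * max t (t powr p)"
proof -
  have t_powr: "t * t powr (p - 1) \<le> max t (t powr p)"
    using powr_mult_base[OF assms(2), of "p - 1"] by (cases "t = 0") auto
  have "max 1 (max (t powr (p - 1)) (s powr (p - 1))) * t
      \<le> (1 + t powr (p - 1) + s powr (p - 1)) * t"
    using assms by (intro mult_right_mono) auto
  also have "\<dots> = t + t * t powr (p - 1) + s powr (p - 1) * t"
    by (simp add: algebra_simps)
  also have "\<dots> \<le> max t (t powr p) + max t (t powr p) + s powr (p - 1) * max t (t powr p)"
    using t_powr by (intro add_mono mult_left_mono) auto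
  finally show ?thesis by (simp add: algebra_simps)
qed

lemma abs_integral_increment_le:
  fixes h :: "'a::real_normed_vector \<Rightarrow> real"
  assumes growth: "\<And>y. \<bar>h (x + y) - h x\<bar>
      \<le> C * max 1 (max (norm y powr (p - 1)) (norm x powr (p - 1))) * norm y"
    and "C \<ge> 0" and "integrable N (\<lambda>y. max (norm y) (norm y powr p))"
  shows "\<bar>\<integral>y. h (x + y) - h x \<partial>N\<bar>
      \<le> C * (2 + norm x powr (p - 1)) * (\<integral>y. max (norm y) (norm y powr p) \<partial>N)"
proof (rule abs_integral_le_mult_integral[OF assms(3)])
  fix y
  have "\<bar>h (x + y) - h x\<bar> \<le> C * (max 1 (max (norm y powr (p - 1)) (norm x powr (p - 1))) * norm y)"
    using growth by (simp add: mult.assoc)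
  also have "\<dots> \<le> C * ((2 + norm x powr (p - 1)) * max (norm y) (norm y powr p))"
    using \<open>C \<ge> 0\<close> by (intro mult_left_mono max_powr_mult_le) auto
  finally show "\<bar>h (x + y) - h x\<bar> \<le> C * (2 + norm x powr (p - 1)) * max (norm y) (norm y powr p)"
    by (simp add: mult.assoc)
qed

lemma integrable_max_norm_powr:
  fixes N :: "'a::real_normed_vector measure"
  assumes "finite_measure N" and "sets N = sets borel"
    and "integrable N (\<lambda>z. norm z powr p)" and "p \<ge> 1"
  shows "integrable N (\<lambda>z. max (norm z) (norm z powr p))"
proof (rule Bochner_Integration.integrable_bound)
  show "integrable N (\<lambda>z. 1 + norm z powr p)"
    using finite_measure.integrable_const[OF assms(1)] assms(3)
    by (rule Bochner_Integration.integrable_add)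
  show "(\<lambda>z. max (norm z) (norm z powr p)) \<in> borel_measurable N"
    unfolding measurable_cong_sets[OF assms(2) refl] by measurable
  have "norm z \<le> 1 + norm z powr p" for z :: 'a
  proof (cases "norm z \<le> 1")
    case False
    then have "norm z powr 1 \<le> norm z powr p"
      using \<open>p \<ge> 1\<close> by (intro powr_mono) auto
    then show ?thesis using False by simp
  qed (simp add: add_increasing2)
  then show "AE z in N. norm (max (norm z) (norm z powr p)) \<le> norm (1 + norm z powr p)"
    by (intro AE_I2) (auto simp: max_def)
qed

lemma (in finite_measure) integrable_shifted_norm_powr:
  fixes X :: "'a \<Rightarrow> 'b::real_normed_vector"
  assumes "X \<in> borel_measurable M" and "integrable M (\<lambda>x. norm (X x) powr (2 * r))"
  shows "integrable M (\<lambda>x. c + norm (X x) powr r)"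
    and "integrable M (\<lambda>x. (c + norm (X x) powr r)\<^sup>2)"
proof -
  define Y where "Y x = norm (X x) powr r" for x
  have "(Y x)\<^sup>2 = norm (X x) powr (2 * r)" for x
    by (simp add: Y_def power2_eq_square powr_add[symmetric])
  then have Y2: "integrable M (\<lambda>x. (Y x)\<^sup>2)"
    using assms(2) by simp
  have "Y \<in> borel_measurable M"
    unfolding Y_def using assms(1) by measurable
  then have Y: "integrable M Y"
    using Y2 by (rule square_integrable_imp_integrable)
  then show "integrable M (\<lambda>x. c + norm (X x) powr r)"
    unfolding Y_def by (intro Bochner_Integration.integrable_add integrable_const)
  have "integrable M (\<lambda>x. c\<^sup>2 + (Y x)\<^sup>2 + 2 * c * Y x)"
    using Y Y2 by (intro Bochner_Integration.integrable_add integrable_const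
        Bochner_Integration.integrable_mult_right)
  then show "integrable M (\<lambda>x. (c + norm (X x) powr r)\<^sup>2)"
    by (simp add: Y_def power2_sum)
qed

lemma LIMSEQ_zero_if_sqrt_mult_LIMSEQ_zero:
  fixes x :: "nat \<Rightarrow> real"
  assumes "(\<lambda>n. sqrt (real n) * x n) \<longlonglongrightarrow> 0"
  shows "x \<longlonglongrightarrow> 0"
proof (rule Lim_null_comparison)
  show "\<forall>\<^sub>F n in sequentially. norm (x n) \<le> \<bar>sqrt (real n) * x n\<bar>"
    by (rule eventually_sequentiallyI[of 1]) (simp add: abs_mult mult_le_cancel_right1)
  show "(\<lambda>n. \<bar>sqrt (real n) * x n\<bar>) \<longlonglongrightarrow> 0"
    using tendsto_rabs_zero[OF assms] .
qed

lemma SUP_ennreal_LIMSEQ_zero: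
  fixes u :: "nat \<Rightarrow> 'b \<Rightarrow> real"
  assumes "\<And>n h. h \<in> F \<Longrightarrow> u n h \<le> b n" and "b \<longlonglongrightarrow> 0"
  shows "(\<lambda>n. SUP h\<in>F. ennreal (u n h)) \<longlonglongrightarrow> 0"
proof (rule tendsto_sandwich[of "\<lambda>_. 0" _ _ "\<lambda>n. ennreal (b n)"])
  show "(\<lambda>n. ennreal (b n)) \<longlonglongrightarrow> 0"
    using tendsto_ennrealI[OF assms(2)] by simp
  show "\<forall>\<^sub>F n in sequentially. (SUP h\<in>F. ennreal (u n h)) \<le> ennreal (b n)"
    using assms(1) by (intro always_eventually allI SUP_least ennreal_leI)
qed simp_all

theorem mainTheorem2:
  fixes M :: "'w measure" and X :: "'w \<Rightarrow> 'a::euclidean_space" and \<X> :: "'a set"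
    and k :: nat and m :: "nat \<Rightarrow> nat" and I :: "nat \<Rightarrow> (nat \<Rightarrow> real) set"
    and f :: "nat \<Rightarrow> nat \<Rightarrow> (nat \<Rightarrow> real) \<Rightarrow> 'a \<Rightarrow> real" and g :: "nat \<Rightarrow> 'a \<Rightarrow> real"
    and J :: "nat set" and p :: real and \<mu> :: "nat \<Rightarrow> 'a measure"
  assumes M: "prob_space M"
    and X_meas: "X \<in> borel_measurable M"
    and X_vals: "\<forall>\<omega>\<in>space M. X \<omega> \<in> \<X>"
    and I_ok: "\<forall>j\<in>{1..k}. param_set_ok (m j) (I j)"
    and J: "J \<subseteq> {1..k+1}"
    and p: "p \<ge> 1"
    and F_meas: "\<forall>j\<in>J. \<forall>h\<in>Fclass k m I f g j. h \<in> borel_measurable borel"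
    and growth: "\<forall>j\<in>J. \<exists>C>0. \<forall>h\<in>Fclass k m I f g j. \<forall>x\<in>\<X>. \<forall>y.
        \<bar>h (x + y) - h x\<bar> \<le> C * max 1 (max (norm y powr (p - 1)) (norm x powr (p - 1))) * norm y"
    and moment: "integrable M (\<lambda>\<omega>. norm (X \<omega>) powr (2 * (p - 1)))"
    and mu: "strong_approx_identity \<mu> p"
  shows "\<forall>j\<in>J.
     (\<lambda>n. SUP h\<in>Fclass k m I f g j.
        ennreal (integral\<^sup>L M (\<lambda>\<omega>. (integral\<^sup>L (\<mu> n) (\<lambda>y. h (X \<omega> + y) - h (X \<omega>)))\<^sup>2)))
        \<longlonglongrightarrow> 0 \<and>
     (\<lambda>n. SUP h\<in>Fclass k m I f g j.
        ennreal (sqrt (real n) *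
          \<bar>integral\<^sup>L M (\<lambda>\<omega>. integral\<^sup>L (\<mu> n) (\<lambda>y. h (X \<omega> + y) - h (X \<omega>)))\<bar>))
        \<longlonglongrightarrow> 0"
proof (intro ballI)
  fix j assume "j \<in> J"
  then obtain C where "C > 0" and C: "\<forall>h\<in>Fclass k m I f g j. \<forall>x\<in>\<X>. \<forall>y.
      \<bar>h (x + y) - h x\<bar> \<le> C * max 1 (max (norm y powr (p - 1)) (norm x powr (p - 1))) * norm y"
    using growth by blast
  define e where "e n = (\<integral>y. max (norm y) (norm y powr p) \<partial>\<mu> n)" for n
  define B where "B = (\<lambda>\<omega>. 2 + norm (X \<omega>) powr (p - 1))"
  have sqrt_e: "(\<lambda>n. sqrt (real n) * e n) \<longlonglongrightarrow> 0" and \<mu>_n: "prob_space (\<mu> n)"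
    "sets (\<mu> n) = sets borel" "integrable (\<mu> n) (\<lambda>z. norm z powr p)" for n
    using mu by (auto simp: strong_approx_identity_def proper_approx_identity_def e_def)
  have "integrable M B" "integrable M (\<lambda>\<omega>. (B \<omega>)\<^sup>2)"
    using finite_measure.integrable_shifted_norm_powr[OF prob_space.finite_measure[OF M] X_meas]
      moment by (simp_all add: B_def)
  have D: "\<bar>\<integral>y. h (X \<omega> + y) - h (X \<omega>) \<partial>\<mu> n\<bar> \<le> (C * e n) * B \<omega>"
    if "h \<in> Fclass k m I f g j" and "\<omega> \<in> space M" for h n \<omega>
    using abs_integral_increment_le[of h "X \<omega>" C p "\<mu> n"] C that X_vals \<open>C > 0\<close>
      integrable_max_norm_powr[OF prob_space.finite_measure[OF \<mu>_n(1)] \<mu>_n(2,3) p]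
    by (simp add: e_def B_def mult_ac)
  have second_moment: "(\<integral>\<omega>. (\<integral>y. h (X \<omega> + y) - h (X \<omega>) \<partial>\<mu> n)\<^sup>2 \<partial>M)
      \<le> (C * e n)\<^sup>2 * (\<integral>\<omega>. (B \<omega>)\<^sup>2 \<partial>M)" if "h \<in> Fclass k m I f g j" for h n
    using integral_square_le_mult_integral[OF \<open>integrable M (\<lambda>\<omega>. (B \<omega>)\<^sup>2)\<close> D[OF that]] .
  have scaled_mean: "sqrt (real n) * \<bar>\<integral>\<omega>. (\<integral>y. h (X \<omega> + y) - h (X \<omega>) \<partial>\<mu> n) \<partial>M\<bar>
      \<le> C * integral\<^sup>L M B * (sqrt (real n) * e n)" if "h \<in> Fclass k m I f g j" for h n
    using mult_left_mono[OF abs_integral_le_mult_integral[OF \<open>integrable M B\<close> D[OF that]],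
        of "sqrt (real n)"]
    by (simp add: mult_ac)
  have "(\<lambda>n. (C * e n)\<^sup>2 * (\<integral>\<omega>. (B \<omega>)\<^sup>2 \<partial>M)) \<longlonglongrightarrow> (C * 0)\<^sup>2 * (\<integral>\<omega>. (B \<omega>)\<^sup>2 \<partial>M)"
    using LIMSEQ_zero_if_sqrt_mult_LIMSEQ_zero[OF sqrt_e] by (intro tendsto_intros)
  moreover have "(\<lambda>n. C * integral\<^sup>L M B * (sqrt (real n) * e n)) \<longlonglongrightarrow> 0"
    using sqrt_e by (rule tendsto_mult_right_zero)
  ultimately show "(\<lambda>n. SUP h\<in>Fclass k m I f g j.
        ennreal (\<integral>\<omega>. (\<integral>y. h (X \<omega> + y) - h (X \<omega>) \<partial>\<mu> n)\<^sup>2 \<partial>M)) \<longlonglongrightarrow> 0 \<and>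
      (\<lambda>n. SUP h\<in>Fclass k m I f g j.
        ennreal (sqrt (real n) * \<bar>\<integral>\<omega>. (\<integral>y. h (X \<omega> + y) - h (X \<omega>) \<partial>\<mu> n) \<partial>M\<bar>)) \<longlonglongrightarrow> 0"
    by (auto intro!: SUP_ennreal_LIMSEQ_zero second_moment scaled_mean)
qed

end
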